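(* Let $d\ge2$, $\gamma^\mu\in\mathbb{S}^d$ with zero diagonal and $\gamma^\mu_{ij}>0$ for all $i\ne j$, and let $b^\mu_i(\mu)=\beta^\mu_i+\sum_jB^\mu_{ij}\mu^j$ with $(\beta^\mu,B^\mu,\gamma^\mu)$ an admissible simplex parameter set. Let $J\subseteq\{1,\dots,d\}$ be the set of indices $j$ for which $b^\mu_j=0$ on $\{\mu\in\Delta^d:\mu^j=0\}$, and $E=\{\mu\in\Delta^d:\mu^j>0\text{ for all }j\notin J\}$. Then there exists a function $\widetilde{\lambda}:E\to\mathbb{R}^{d-1}$ such that $\widetilde{b}^\mu=\widetilde{c}^\mu\widetilde{\lambda}(\mu)$ for all $\mu\in E$.
   Context: $\Delta^d$ is the unit simplex. For $\mu\in\Delta^d$, $c^\mu\in\mathbb{S}^d$ is given by $c^\mu_{ii}=\sum_{j\ne i}\gamma^\mu_{ij}\mu^i\mu^j$, $c^\mu_{ij}=-\gamma^\mu_{ij}\mu^i\mu^j$ ($i\ne j$); $\widetilde{c}^\mu$ is $c^\mu$ with the $d$-th row and column deleted and $\widetilde{b}^\mu$ is $b^\mu$ with the $d$-th entry deleted. An admissible simplex parameter set is $(\beta^\mu,B^\mu,\gamma^\mu)$ with $\gamma^\mu$ having nonnegative off-diagonal and zero diagonal entries, $(B^\mu)^\top\mathbf{1}+((\beta^\mu)^\top\mathbf{1})\mathbf{1}=0$, $\beta^\mu_i+B^\mu_{ij}\ge0$ for $i\ne j$. *)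

theory Defs
  imports Complex_Main
begin

definition unit_simplex :: "nat \<Rightarrow> (nat \<Rightarrow> real) set" where
  "unit_simplex d = {\<mu>. (\<forall>i\<in>{1..d}. 0 \<le> \<mu> i) \<and> (\<Sum>i=1..d. \<mu> i) = 1}"

definition admissible_simplex_params ::
  "nat \<Rightarrow> (nat \<Rightarrow> real) \<Rightarrow> (nat \<Rightarrow> nat \<Rightarrow> real) \<Rightarrow> (nat \<Rightarrow> nat \<Rightarrow> real) \<Rightarrow> bool" where
  "admissible_simplex_params d \<beta> B \<gamma> \<longleftrightarrow>
     (\<forall>i\<in>{1..d}. \<forall>j\<in>{1..d}. \<gamma> i j = \<gamma> j i) \<and>
     (\<forall>i\<in>{1..d}. \<gamma> i i = 0) \<and>
     (\<forall>i\<in>{1..d}. \<forall>j\<in>{1..d}. i \<noteq> j \<longrightarrow> 0 \<le> \<gamma> i j) \<and>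
     (\<forall>j\<in>{1..d}. (\<Sum>i=1..d. B i j) + (\<Sum>i=1..d. \<beta> i) = 0) \<and>
     (\<forall>i\<in>{1..d}. \<forall>j\<in>{1..d}. i \<noteq> j \<longrightarrow> 0 \<le> \<beta> i + B i j)"

definition drift_b :: "nat \<Rightarrow> (nat \<Rightarrow> real) \<Rightarrow> (nat \<Rightarrow> nat \<Rightarrow> real) \<Rightarrow> (nat \<Rightarrow> real) \<Rightarrow> nat \<Rightarrow> real" where
  "drift_b d \<beta> B \<mu> i = \<beta> i + (\<Sum>j=1..d. B i j * \<mu> j)"

definition diff_c :: "nat \<Rightarrow> (nat \<Rightarrow> nat \<Rightarrow> real) \<Rightarrow> (nat \<Rightarrow> real) \<Rightarrow> nat \<Rightarrow> nat \<Rightarrow> real" where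
  "diff_c d \<gamma> \<mu> i j =
     (if i = j then (\<Sum>k\<in>{1..d} - {i}. \<gamma> i k * \<mu> i * \<mu> k)
      else - \<gamma> i j * \<mu> i * \<mu> j)"

definition J_set :: "nat \<Rightarrow> (nat \<Rightarrow> real) \<Rightarrow> (nat \<Rightarrow> nat \<Rightarrow> real) \<Rightarrow> nat set" where
  "J_set d \<beta> B = {j\<in>{1..d}. \<forall>\<mu>\<in>unit_simplex d. \<mu> j = 0 \<longrightarrow> drift_b d \<beta> B \<mu> j = 0}"

definition E_set :: "nat \<Rightarrow> (nat \<Rightarrow> real) \<Rightarrow> (nat \<Rightarrow> nat \<Rightarrow> real) \<Rightarrow> (nat \<Rightarrow> real) set" where
  "E_set d \<beta> B = {\<mu>\<in>unit_simplex d. \<forall>j\<in>{1..d} - J_set d \<beta> B. 0 < \<mu> j}"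

end

theory Submission
  imports Defs
begin

text \<open>
  For fixed \<open>\<mu>\<close> the matrix \<open>c\<^sup>\<mu>\<close> is the weighted graph Laplacian with edge weights
  \<open>\<gamma>\<^sub>i\<^sub>j \<mu>\<^sup>i \<mu>\<^sup>j\<close>, so \<open>(c\<^sup>\<mu> x)\<^sub>i = \<Sum>\<^sub>j \<gamma>\<^sub>i\<^sub>j \<mu>\<^sup>i \<mu>\<^sup>j (x\<^sub>i - x\<^sub>j)\<close>. On the support of \<open>\<mu>\<close> all these
  weights are positive, so the Laplacian there has kernel spanned by the constants and its range
  is the hyperplane of vectors summing to zero. The admissibility condition on the columns of
  \<open>B\<^sup>\<mu>\<close> makes the entries of \<open>b\<^sup>\<mu>\<close> sum to zero, and on \<open>E\<close> every coordinate with \<open>\<mu>\<^sup>i = 0\<close>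
  lies in \<open>J\<close>, so \<open>b\<^sup>\<mu>\<close> vanishes off the support. Hence \<open>b\<^sup>\<mu> = c\<^sup>\<mu> \<lambda>\<close> for some \<open>\<lambda>\<close>;
  normalising \<open>\<lambda>\<^sub>d = 0\<close> removes the last column, and dropping the last row gives the claim.
  Solvability of the Laplacian system is proved by eliminating one vertex at a time
  (Kron reduction), which keeps the weights symmetric and positive.
\<close>

lemma laplacian_solution_extend:
  fixes w :: "'a \<Rightarrow> 'a \<Rightarrow> real" and b l :: "'a \<Rightarrow> real"
  assumes "v \<notin> F"
    and W_eq: "W = (\<Sum>j\<in>F. w v j)" and "W \<noteq> 0"
    and reduced: "\<forall>i\<in>F. (\<Sum>j\<in>F. (w i j + w i v * w v j / W) * (l i - l j))
                         = b i + w i v * b v / W"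
  shows "\<exists>lam. \<forall>i\<in>insert v F. (\<Sum>j\<in>insert v F. w i j * (lam i - lam j)) = b i"
proof -
  have "finite F"
    using \<open>W \<noteq> 0\<close> W_eq sum.infinite by blast
  define lv where "lv = (b v + (\<Sum>j\<in>F. w v j * l j)) / W"
  define lam where "lam = l(v := lv)"
  have lam_F: "lam j = l j" if "j \<in> F" for j
    using that \<open>v \<notin> F\<close> by (auto simp: lam_def)
  have weighted_diff: "(\<Sum>j\<in>F. w v j * (x - l j)) = W * x - (\<Sum>j\<in>F. w v j * l j)" for x
    by (simp add: W_eq right_diff_distrib sum_subtractf sum_distrib_right)
  have "(\<Sum>j\<in>insert v F. w i j * (lam i - lam j)) = b i" if "i \<in> insert v F" for i
  proof (cases "i = v")
    case True
    have "(\<Sum>j\<in>insert v F. w i j * (lam i - lam j)) = (\<Sum>j\<in>F. w v j * (lv - l j))"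
      using True \<open>finite F\<close> \<open>v \<notin> F\<close> lam_F by (simp add: lam_def)
    also have "\<dots> = b v"
      using \<open>W \<noteq> 0\<close> by (simp add: weighted_diff lv_def)
    finally show ?thesis
      using True by simp
  next
    case False
    with that have "i \<in> F" by simp
    define Q where "Q = (\<Sum>j\<in>F. w v j * (l i - l j))"
    have "Q = W * l i - (\<Sum>j\<in>F. w v j * l j)"
      unfolding Q_def by (rule weighted_diff)
    then have "l i - lv = (Q - b v) / W"
      using \<open>W \<noteq> 0\<close> by (simp add: lv_def field_simps)
    have "(\<Sum>j\<in>F. w i j * (l i - l j)) + w i v / W * Q = b i + w i v * b v / W"
      using reduced \<open>i \<in> F\<close>
      by (simp add: Q_def distrib_right sum.distrib sum_distrib_left mult.assoc)
    moreover have "(\<Sum>j\<in>insert v F. w i j * (lam i - lam j))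
        = w i v * (l i - lv) + (\<Sum>j\<in>F. w i j * (l i - l j))"
      using \<open>i \<in> F\<close> False \<open>finite F\<close> \<open>v \<notin> F\<close> lam_F by (simp add: lam_def)
    ultimately show ?thesis
      using \<open>l i - lv = (Q - b v) / W\<close> by (simp add: diff_divide_distrib right_diff_distrib)
  qed
  then show ?thesis
    by blast
qed

lemma laplacian_system_solvable:
  fixes w :: "'a \<Rightarrow> 'a \<Rightarrow> real" and b :: "'a \<Rightarrow> real"
  assumes "finite V"
    and "\<forall>i\<in>V. \<forall>j\<in>V. w i j = w j i"
    and "\<forall>i\<in>V. \<forall>j\<in>V. i \<noteq> j \<longrightarrow> 0 < w i j"
    and "(\<Sum>i\<in>V. b i) = 0"
  shows "\<exists>lam. \<forall>i\<in>V. (\<Sum>j\<in>V. w i j * (lam i - lam j)) = b i"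
  using assms
proof (induction V arbitrary: w b rule: finite_induct)
  case empty
  then show ?case by simp
next
  case (insert v F)
  have sym: "w i j = w j i" if "i \<in> insert v F" "j \<in> insert v F" for i j
    using insert.prems(1) that by blast
  have pos: "0 < w i j" if "i \<in> insert v F" "j \<in> insert v F" "i \<noteq> j" for i j
    using insert.prems(2) that by blast
  show ?case
  proof (cases "F = {}")
    case True
    then show ?thesis
      using insert.prems(3) by (intro exI[of _ "\<lambda>_. 0"]) simp
  next
    case False
    define W where "W = (\<Sum>j\<in>F. w v j)"
    have "0 < W"
      unfolding W_def using insert.hyps False pos by (intro sum_pos) auto
    define w' where "w' i j = w i j + w i v * w v j / W" for i j
    define b' where "b' i = b i + w i v * b v / W" for i
    have "\<forall>i\<in>F. \<forall>j\<in>F. w' i j = w' j i"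
    proof (intro ballI)
      fix i j assume "i \<in> F" "j \<in> F"
      then have "w i j = w j i" "w i v = w v i" "w v j = w j v"
        by (auto intro: sym)
      then show "w' i j = w' j i"
        by (simp add: w'_def mult.commute)
    qed
    moreover have "\<forall>i\<in>F. \<forall>j\<in>F. i \<noteq> j \<longrightarrow> 0 < w' i j"
      using pos insert.hyps(2) \<open>0 < W\<close> unfolding w'_def
      by (metis add_pos_pos divide_pos_pos insertCI mult_pos_pos)
    moreover have "(\<Sum>i\<in>F. b' i) = 0"
    proof -
      have "(\<Sum>i\<in>F. w i v) = W"
        unfolding W_def by (intro sum.cong) (auto intro: sym)
      then have "(\<Sum>i\<in>F. b' i) = (\<Sum>i\<in>F. b i) + b v"
        using \<open>0 < W\<close> by (simp add: b'_def sum.distrib flip: sum_distrib_right sum_divide_distrib)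
      also have "\<dots> = 0"
        using insert.prems(3) insert.hyps by simp
      finally show ?thesis .
    qed
    ultimately obtain l where "\<forall>i\<in>F. (\<Sum>j\<in>F. w' i j * (l i - l j)) = b' i"
      using insert.IH by blast
    then show ?thesis
      using insert.hyps(2) \<open>0 < W\<close> unfolding w'_def b'_def
      by (intro laplacian_solution_extend[where W = W]) (auto simp: W_def)
  qed
qed

lemma diff_c_mult_eq_weighted_diffs:
  assumes "i \<in> {1..d}"
  shows "(\<Sum>j=1..d. diff_c d \<gamma> \<mu> i j * x j) = (\<Sum>j=1..d. \<gamma> i j * \<mu> i * \<mu> j * (x i - x j))"
proof -
  have split_i: "(\<Sum>j=1..d. f j) = f i + (\<Sum>j\<in>{1..d}-{i}. f j)" for f :: "nat \<Rightarrow> real"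
    using assms by (simp add: sum.remove)
  have "(\<Sum>j=1..d. diff_c d \<gamma> \<mu> i j * x j)
      = (\<Sum>k\<in>{1..d}-{i}. \<gamma> i k * \<mu> i * \<mu> k) * x i + (\<Sum>j\<in>{1..d}-{i}. - \<gamma> i j * \<mu> i * \<mu> j * x j)"
    unfolding split_i[of "\<lambda>j. diff_c d \<gamma> \<mu> i j * x j"]
    by (intro arg_cong2[where f = "(+)"] sum.cong) (auto simp: diff_c_def)
  also have "\<dots> = (\<Sum>j\<in>{1..d}-{i}. \<gamma> i j * \<mu> i * \<mu> j * (x i - x j))"
    by (simp add: sum_distrib_right right_diff_distrib sum_subtractf sum_negf)
  also have "\<dots> = (\<Sum>j=1..d. \<gamma> i j * \<mu> i * \<mu> j * (x i - x j))"
    unfolding split_i[of "\<lambda>j. \<gamma> i j * \<mu> i * \<mu> j * (x i - x j)"] by simp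
  finally show ?thesis .
qed

lemma reduced_diff_c_solvable:
  fixes b \<mu> :: "nat \<Rightarrow> real" and \<gamma> :: "nat \<Rightarrow> nat \<Rightarrow> real"
  assumes "0 < d"
    and sym: "\<forall>i\<in>{1..d}. \<forall>j\<in>{1..d}. \<gamma> i j = \<gamma> j i"
    and pos: "\<forall>i\<in>{1..d}. \<forall>j\<in>{1..d}. i \<noteq> j \<longrightarrow> 0 < \<gamma> i j"
    and nonneg: "\<forall>i\<in>{1..d}. 0 \<le> \<mu> i"
    and "(\<Sum>i=1..d. b i) = 0"
    and b_off_support: "\<forall>i\<in>{1..d}. \<mu> i = 0 \<longrightarrow> b i = 0"
  shows "\<exists>L. \<forall>i\<in>{1..d-1}. b i = (\<Sum>j=1..d-1. diff_c d \<gamma> \<mu> i j * L j)"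
proof -
  define S where "S = {j\<in>{1..d}. 0 < \<mu> j}"
  define w where "w i j = \<gamma> i j * \<mu> i * \<mu> j" for i j
  have off_S: "\<mu> j = 0" if "j \<in> {1..d}" "j \<notin> S" for j
    using nonneg that by (force simp: S_def)
  have "(\<Sum>i=1..d. b i) = (\<Sum>i\<in>S. b i)"
    using off_S b_off_support by (intro sum.mono_neutral_right) (auto simp: S_def)
  then have "(\<Sum>i\<in>S. b i) = 0"
    using \<open>(\<Sum>i=1..d. b i) = 0\<close> by simp
  moreover have "\<forall>i\<in>S. \<forall>j\<in>S. w i j = w j i"
    using sym by (simp add: S_def w_def)
  moreover have "\<forall>i\<in>S. \<forall>j\<in>S. i \<noteq> j \<longrightarrow> 0 < w i j"
    using pos by (simp add: S_def w_def)
  ultimately obtain l where l: "\<forall>i\<in>S. (\<Sum>j\<in>S. w i j * (l i - l j)) = b i"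
    using laplacian_system_solvable[of S w b] by (auto simp: S_def)
  define L where "L j = l j - l d" for j
  have "b i = (\<Sum>j=1..d-1. diff_c d \<gamma> \<mu> i j * L j)" if "i \<in> {1..d-1}" for i
  proof -
    have i: "i \<in> {1..d}"
      using that by auto
    have "(\<Sum>j=1..d-1. diff_c d \<gamma> \<mu> i j * L j) = (\<Sum>j=1..d. diff_c d \<gamma> \<mu> i j * L j)"
      using \<open>0 < d\<close> by (cases d) (simp_all add: L_def)
    also have "\<dots> = (\<Sum>j=1..d. w i j * (l i - l j))"
      unfolding diff_c_mult_eq_weighted_diffs[OF i] by (simp add: w_def L_def)
    also have "\<dots> = b i"
    proof (cases "i \<in> S")
      case True
      have "(\<Sum>j=1..d. w i j * (l i - l j)) = (\<Sum>j\<in>S. w i j * (l i - l j))"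
        using off_S by (intro sum.mono_neutral_right) (auto simp: S_def w_def)
      then show ?thesis
        using l True by simp
    next
      case False
      then show ?thesis
        using off_S[OF i] b_off_support i by (simp add: w_def)
    qed
    finally show ?thesis ..
  qed
  then show ?thesis
    by blast
qed

lemma sum_drift_b_eq_0:
  assumes "admissible_simplex_params d \<beta> B \<gamma>" and "\<mu> \<in> unit_simplex d"
  shows "(\<Sum>i=1..d. drift_b d \<beta> B \<mu> i) = 0"
proof -
  have col: "(\<Sum>i=1..d. B i j) = - (\<Sum>i=1..d. \<beta> i)" if "j \<in> {1..d}" for j
    using assms(1) that unfolding admissible_simplex_params_def by (simp add: eq_neg_iff_add_eq_0)
  have "(\<Sum>i=1..d. \<Sum>j=1..d. B i j * \<mu> j) = (\<Sum>j=1..d. \<Sum>i=1..d. B i j * \<mu> j)"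
    by (rule sum.swap)
  also have "\<dots> = (\<Sum>j=1..d. - (\<Sum>i=1..d. \<beta> i) * \<mu> j)"
    by (intro sum.cong refl) (metis col sum_distrib_right)
  also have "\<dots> = - (\<Sum>i=1..d. \<beta> i)"
    using assms(2) by (simp add: unit_simplex_def sum_negf flip: sum_distrib_left)
  finally show ?thesis
    by (simp add: drift_b_def sum.distrib)
qed

lemma drift_b_eq_0_off_support:
  assumes "\<mu> \<in> E_set d \<beta> B" and "i \<in> {1..d}" and "\<mu> i = 0"
  shows "drift_b d \<beta> B \<mu> i = 0"
proof -
  have "i \<in> J_set d \<beta> B"
    using assms unfolding E_set_def by force
  then show ?thesis
    using assms unfolding J_set_def E_set_def by blast
qed

theorem mainTheorem16:
  fixes d :: nat and \<beta> :: "nat \<Rightarrow> real" and B \<gamma> :: "nat \<Rightarrow> nat \<Rightarrow> real"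
  assumes "2 \<le> d"
    and "admissible_simplex_params d \<beta> B \<gamma>"
    and "\<forall>i\<in>{1..d}. \<forall>j\<in>{1..d}. i \<noteq> j \<longrightarrow> 0 < \<gamma> i j"
  shows "\<exists>lam :: (nat \<Rightarrow> real) \<Rightarrow> nat \<Rightarrow> real.
           \<forall>\<mu>\<in>E_set d \<beta> B. \<forall>i\<in>{1..d-1}.
             drift_b d \<beta> B \<mu> i = (\<Sum>j=1..d-1. diff_c d \<gamma> \<mu> i j * lam \<mu> j)"
proof -
  have "\<forall>\<mu>\<in>E_set d \<beta> B. \<exists>L. \<forall>i\<in>{1..d-1}.
          drift_b d \<beta> B \<mu> i = (\<Sum>j=1..d-1. diff_c d \<gamma> \<mu> i j * L j)"
  proof
    fix \<mu> assume "\<mu> \<in> E_set d \<beta> B"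
    then have "\<mu> \<in> unit_simplex d"
      by (simp add: E_set_def)
    show "\<exists>L. \<forall>i\<in>{1..d-1}. drift_b d \<beta> B \<mu> i = (\<Sum>j=1..d-1. diff_c d \<gamma> \<mu> i j * L j)"
    proof (rule reduced_diff_c_solvable)
      show "\<forall>i\<in>{1..d}. 0 \<le> \<mu> i"
        using \<open>\<mu> \<in> unit_simplex d\<close> by (simp add: unit_simplex_def)
      show "(\<Sum>i=1..d. drift_b d \<beta> B \<mu> i) = 0"
        using sum_drift_b_eq_0[OF assms(2) \<open>\<mu> \<in> unit_simplex d\<close>] .
      show "\<forall>i\<in>{1..d}. \<mu> i = 0 \<longrightarrow> drift_b d \<beta> B \<mu> i = 0"
        using drift_b_eq_0_off_support[OF \<open>\<mu> \<in> E_set d \<beta> B\<close>] by blast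
    qed (use assms in \<open>auto simp: admissible_simplex_params_def\<close>)
  qed
  then show ?thesis
    by (rule bchoice)
qed

end
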